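(* Let $G\in\{GL_n,SO_{2n+1},Sp_{2n},SO_{2n}\}$, $I\subseteq\Sigma_G^+$, and let $\lambda,\mu\in\mathcal P_n$ with $|\lambda|\ge|\mu|$. Then for every integer $k\ge\frac{|\lambda|-|\mu|}{2}$: $$\widetilde K^{G,I}_{\lambda,\mu}(q)=K^{G,I}_{\lambda+k\kappa,\mu+k\kappa}(q)\quad\text{if }G=GL_n,Sp_{2n},SO_{2n},\qquad \widetilde K^{SO_{2n+1},I}_{\lambda,\mu}(q)=\mathcal K^{SO_{2n+1},I}_{\lambda+k\kappa,\mu+k\kappa}(q).$$
   Context: Notation: $|\beta|=\sum_i\beta_i$; $\kappa=(1,\dots,1)\in\mathbb N^n$; $\rho=(n,\dots,1)$; $\mathcal P_n$ = nonincreasing $n$-tuples of nonnegative integers. $\varepsilon_1,\dots,\varepsilon_n$ is the standard basis of $\mathbb R^n$, and $e^\beta=x^\beta=x_1^{\beta_1}\cdots x_n^{\beta_n}$. Positive roots: $R^+_{GL_n}=\{\varepsilon_i-\varepsilon_j:i<j\}$; $R^+_{SO_{2n+1}}=\{\varepsilon_i\pm\varepsilon_j:i<j\}\cup\{\varepsilon_i\}$; $R^+_{Sp_{2n}}=\{\varepsilon_i\pm\varepsilon_j:i<j\}\cup\{2\varepsilon_i\}$; $R^+_{SO_{2n}}=\{\varepsilon_i\pm\varepsilon_j:i<j\}$. Simple roots $\Sigma_G^+$: $\alpha_i=\varepsilon_i-\varepsilon_{i+1}$ ($1\le i\le n-1$), plus for $SO_{2n+1}$: $\alpha_n=\varepsilon_n$,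 for $Sp_{2n}$: $\alpha_n=2\varepsilon_n$, for $SO_{2n}$: $\alpha_n=\varepsilon_{n-1}+\varepsilon_n$. $W_G$: $S_n$ (permutations of coordinates, $(\sigma\beta)_i=\beta_{\sigma(i)}$) for $GL_n$; all signed permutations for $SO_{2n+1},Sp_{2n}$; signed permutations with an even number of sign changes for $SO_{2n}$; $(-1)^{\ell(w)}=\det w$. $\rho_G$: $\rho_{GL_n}=\rho$, $\rho_{SO_{2n+1}}=(n-\frac12,\dots,\frac12)$, $\rho_{Sp_{2n}}=(n,\dots,1)$, $\rho_{SO_{2n}}=(n-1,\dots,0)$; dot action $w\circ\beta=w(\beta+\rho_G)-\rho_G$. For $I\subseteq\Sigma_G^+$, let $R^+_{G,I}$ be the set of positive roots lying in the $\mathbb Z$-span of $I$ and $S_{G,I}=R^+_G\setminus R^+_{G,I}$. Define $\mathcal P_q^{G,I}$ by $\prod_{\alpha\in S_{G,I}}(1-qe^\alpha)^{-1}=\sum_\beta\mathcal P^{G,I}_q(\beta)e^\beta$, and for $SO_{2n+1}$ define $\mathcal P^{SO_{2n+1},I}_{q,h}$ by $\prod_{\alpha\in S_{SO_{2n+1},I}}(1-q^{h(\alpha)}e^\alpha)^{-1}=\sum_\beta\mathcal P^{SO_{2n+1},I}_{q,h}(\beta)e^\beta$ where $h(\varepsilon_i)=2$ and $h(\alpha)=1$ for other roots. For $\lambda,\mu\in\mathbb Z^n$: $K^{G,I}_{\lambda,\mu}(q)=\sum_{w\in W_G}(-1)^{\ell(w)}\mathcal P^{G,I}_q(w\circ\lambda-\mu)$;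 $\mathcal K^{SO_{2n+1},I}_{\lambda,\mu}(q)=\sum_{w\in W_G}(-1)^{\ell(w)}\mathcal P^{SO_{2n+1},I}_{q,h}(w\circ\lambda-\mu)$; and the stable limit $\widetilde K^{G,I}_{\lambda,\mu}(q)=\sum_{\sigma\in S_n}(-1)^{\ell(\sigma)}\mathcal P^{G,I}_q(\sigma\circ\lambda-\mu)$ for $G=GL_n,Sp_{2n},SO_{2n}$, and $\widetilde K^{SO_{2n+1},I}_{\lambda,\mu}(q)=\sum_{\sigma\in S_n}(-1)^{\ell(\sigma)}\mathcal P^{SO_{2n+1},I}_{q,h}(\sigma\circ\lambda-\mu)$. *)

theory Defs
  imports Complex_Main "HOL-Combinatorics.Permutations"
begin

(* Conventions: coordinates are 0-indexed, i.e. coordinate i (0 <= i < n) of the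
   paper's vectors is the value at i-1 ... here at index i.  Vectors in R^n are
   functions nat => rat; only the values at indices < n are meaningful. *)

type_synonym vec = "nat \<Rightarrow> rat"

datatype grp = GL | SO_odd | Sp | SO_even

definition eps :: "nat \<Rightarrow> vec" where
  "eps i = (\<lambda>k. if k = i then 1 else 0)"

definition vadd :: "vec \<Rightarrow> vec \<Rightarrow> vec" where
  "vadd a b = (\<lambda>k. a k + b k)"

definition vsub :: "vec \<Rightarrow> vec \<Rightarrow> vec" where
  "vsub a b = (\<lambda>k. a k - b k)"

definition vscale :: "rat \<Rightarrow> vec \<Rightarrow> vec" where
  "vscale c a = (\<lambda>k. c * a k)"

definition posroots :: "grp \<Rightarrow> nat \<Rightarrow> vec set" where
  "posroots G n =
     {vsub (eps i) (eps j) | i j. i < j \<and> j < n}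
   \<union> (if G = GL then {} else {vadd (eps i) (eps j) | i j. i < j \<and> j < n})
   \<union> (if G = SO_odd then {eps i | i. i < n} else {})
   \<union> (if G = Sp then {vscale 2 (eps i) | i. i < n} else {})"

definition simple_roots :: "grp \<Rightarrow> nat \<Rightarrow> vec set" where
  "simple_roots G n =
     {vsub (eps i) (eps (Suc i)) | i. Suc i < n}
   \<union> (case G of
        GL \<Rightarrow> {}
      | SO_odd \<Rightarrow> (if 0 < n then {eps (n - 1)} else {})
      | Sp \<Rightarrow> (if 0 < n then {vscale 2 (eps (n - 1))} else {})
      | SO_even \<Rightarrow> (if 2 \<le> n then {vadd (eps (n - 2)) (eps (n - 1))} else {}))"

definition in_zspan :: "vec set \<Rightarrow> vec \<Rightarrow> bool" where
  "in_zspan I a \<longleftrightarrow> (\<exists>c :: vec \<Rightarrow> int. a = (\<lambda>k. \<Sum>b\<in>I. of_int (c b) * b k))"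

definition SGI :: "grp \<Rightarrow> vec set \<Rightarrow> nat \<Rightarrow> vec set" where
  "SGI G I n = posroots G n - {a \<in> posroots G n. in_zspan I a}"

(* height function h: 2 on the short roots eps_i of SO_{2n+1}, 1 otherwise.
   With flag hflag = False all weights are 1 (the plain q-analogue). *)
definition hwt :: "bool \<Rightarrow> vec \<Rightarrow> nat" where
  "hwt hflag a = (if hflag \<and> (\<exists>i. a = eps i) then 2 else 1)"

(* coefficient of e^beta in prod_{a in S_{G,I}} (1 - q^{h(a)} e^a)^{-1}:
   sum over multiplicity functions m : S_{G,I} -> N with sum m(a) a = beta
   of q^(sum m(a) h(a)) *)
definition Pq :: "grp \<Rightarrow> vec set \<Rightarrow> nat \<Rightarrow> bool \<Rightarrow> 'a::comm_ring_1 \<Rightarrow> vec \<Rightarrow> 'a" where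
  "Pq G I n hflag q beta =
     (\<Sum>m\<in>{m :: vec \<Rightarrow> nat. (\<forall>a. a \<notin> SGI G I n \<longrightarrow> m a = 0) \<and>
              (\<forall>i<n. (\<Sum>a\<in>SGI G I n. of_nat (m a) * a i) = beta i)}.
        q ^ (\<Sum>a\<in>SGI G I n. m a * hwt hflag a))"

definition rhoG :: "grp \<Rightarrow> nat \<Rightarrow> vec" where
  "rhoG G n = (\<lambda>i. case G of
        GL \<Rightarrow> of_nat n - of_nat i
      | SO_odd \<Rightarrow> of_nat n - of_nat i - 1/2
      | Sp \<Rightarrow> of_nat n - of_nat i
      | SO_even \<Rightarrow> of_nat n - of_nat i - 1)"

(* A signed permutation is a pair (sigma, s): (w x)_i = (-1)^{s i} x_{sigma i} *)
definition wact :: "(nat \<Rightarrow> nat) \<times> (nat \<Rightarrow> bool) \<Rightarrow> vec \<Rightarrow> vec" where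
  "wact w x = (\<lambda>i. (if snd w i then -1 else 1) * x (fst w i))"

(* (-1)^{l(w)} = det w *)
definition wsign :: "nat \<Rightarrow> (nat \<Rightarrow> nat) \<times> (nat \<Rightarrow> bool) \<Rightarrow> int" where
  "wsign n w = sign (fst w) * (-1) ^ card {i. i < n \<and> snd w i}"

definition weyl :: "grp \<Rightarrow> nat \<Rightarrow> ((nat \<Rightarrow> nat) \<times> (nat \<Rightarrow> bool)) set" where
  "weyl G n = {(p, s). p permutes {..<n} \<and> (\<forall>i. n \<le> i \<longrightarrow> \<not> s i) \<and>
       (G = GL \<longrightarrow> (\<forall>i. \<not> s i)) \<and>
       (G = SO_even \<longrightarrow> even (card {i. i < n \<and> s i}))}"

definition dot :: "grp \<Rightarrow> nat \<Rightarrow> (nat \<Rightarrow> nat) \<times> (nat \<Rightarrow> bool) \<Rightarrow> vec \<Rightarrow> vec" where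
  "dot G n w beta = vsub (wact w (vadd beta (rhoG G n))) (rhoG G n)"

definition ivec :: "(nat \<Rightarrow> int) \<Rightarrow> vec" where
  "ivec x = (\<lambda>i. of_int (x i))"

(* K^{G,I}_{lam,mu}(q) (hflag = False) resp. calligraphic K for SO_{2n+1} (hflag = True) *)
definition Kq :: "grp \<Rightarrow> vec set \<Rightarrow> nat \<Rightarrow> bool \<Rightarrow> 'a::comm_ring_1 \<Rightarrow>
                   (nat \<Rightarrow> int) \<Rightarrow> (nat \<Rightarrow> int) \<Rightarrow> 'a" where
  "Kq G I n hflag q lam mu =
     (\<Sum>w\<in>weyl G n. of_int (wsign n w) * Pq G I n hflag q (vsub (dot G n w (ivec lam)) (ivec mu)))"

definition Ktilde :: "grp \<Rightarrow> vec set \<Rightarrow> nat \<Rightarrow> bool \<Rightarrow> 'a::comm_ring_1 \<Rightarrow>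
                   (nat \<Rightarrow> int) \<Rightarrow> (nat \<Rightarrow> int) \<Rightarrow> 'a" where
  "Ktilde G I n hflag q lam mu =
     (\<Sum>p\<in>{p. p permutes {..<n}}. of_int (sign p) *
        Pq G I n hflag q (vsub (dot G n (p, \<lambda>_. False) (ivec lam)) (ivec mu)))"

definition is_partition :: "nat \<Rightarrow> (nat \<Rightarrow> int) \<Rightarrow> bool" where
  "is_partition n lam \<longleftrightarrow> (\<forall>i<n. 0 \<le> lam i) \<and> (\<forall>i j. i \<le> j \<and> j < n \<longrightarrow> lam j \<le> lam i)"

definition wsize :: "nat \<Rightarrow> (nat \<Rightarrow> int) \<Rightarrow> int" where
  "wsize n lam = (\<Sum>i<n. lam i)"

definition shift :: "(nat \<Rightarrow> int) \<Rightarrow> int \<Rightarrow> (nat \<Rightarrow> int)" where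
  "shift lam k = (\<lambda>i. lam i + k)"

end

theory Submission
  imports Defs
begin

text \<open>Every positive root has nonnegative coordinate sum, so \<open>\<P>\<^sub>q(\<beta>)\<close> vanishes whenever
  \<open>\<beta>\<close> has negative coordinate sum. For \<open>k \<ge> (|\<lambda>| - |\<mu>|)/2\<close>, every Weyl group element
  with a sign change sends \<open>\<lambda> + k\<kappa>\<close> under the dot action to a weight whose coordinate sum
  is smaller than that of \<open>\<mu> + k\<kappa>\<close>: a negated coordinate of \<open>\<lambda> + k\<kappa> + \<rho>\<^sub>G\<close> exceeds \<open>k\<close>
  and costs twice its value. Only the terms of plain permutations survive in \<open>K\<close>, and for
  these the dot action commutes with the shift by \<open>k\<kappa>\<close>.\<close>

lemma sum_eps: "(\<Sum>k<n. eps i k) = (if i < n then 1 else 0)"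
  unfolding eps_def by (simp add: sum.delta)

lemma posroots_sum_nonneg: "a \<in> posroots G n \<Longrightarrow> 0 \<le> (\<Sum>i<n. a i)"
  unfolding posroots_def
  by (auto simp: vsub_def vadd_def vscale_def sum_subtractf sum.distrib
        sum_distrib_left[symmetric] sum_eps split: if_splits)

lemma Pq_eq_0_if_sum_neg:
  assumes "(\<Sum>i<n. beta i) < 0"
  shows "Pq G I n h q beta = 0"
proof -
  have "\<not> (\<forall>i<n. (\<Sum>a\<in>SGI G I n. of_nat (m a) * a i) = beta i)" for m :: "vec \<Rightarrow> nat"
  proof
    assume m: "\<forall>i<n. (\<Sum>a\<in>SGI G I n. of_nat (m a) * a i) = beta i"
    have "(\<Sum>i<n. beta i) = (\<Sum>i<n. \<Sum>a\<in>SGI G I n. of_nat (m a) * a i)"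
      using m by simp
    also have "\<dots> = (\<Sum>a\<in>SGI G I n. of_nat (m a) * (\<Sum>i<n. a i))"
      by (subst sum.swap) (simp add: sum_distrib_left)
    also have "\<dots> \<ge> 0"
      by (intro sum_nonneg mult_nonneg_nonneg of_nat_0_le_iff posroots_sum_nonneg)
         (auto simp: SGI_def)
    finally show False using assms by simp
  qed
  then have "{m :: vec \<Rightarrow> nat. (\<forall>a. a \<notin> SGI G I n \<longrightarrow> m a = 0) \<and>
      (\<forall>i<n. (\<Sum>a\<in>SGI G I n. of_nat (m a) * a i) = beta i)} = {}"
    by blast
  then show ?thesis unfolding Pq_def by (simp only: sum.empty)
qed

lemma rhoG_nonneg: "j < n \<Longrightarrow> 0 \<le> rhoG G n j"
  by (cases G) (auto simp: rhoG_def)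

lemma rhoG_pos: "j < n \<Longrightarrow> G \<noteq> SO_even \<or> Suc j < n \<Longrightarrow> 0 < rhoG G n j"
  by (cases G) (auto simp: rhoG_def)

lemma sum_ivec_shift: "(\<Sum>i<n. ivec (shift lam k) i) = of_int (wsize n lam) + of_nat n * of_int k"
  by (simp add: ivec_def shift_def wsize_def sum.distrib)

lemma sum_dot:
  assumes "p permutes {..<n}"
  shows "(\<Sum>i<n. dot G n (p, s) x i)
       = (\<Sum>i<n. x i) - 2 * (\<Sum>i\<in>{i. i < n \<and> s i}. x (p i) + rhoG G n (p i))"
proof -
  define y where "y = (\<lambda>j. x j + rhoG G n j)"
  have "dot G n (p, s) x i = y (p i) - 2 * (if s i then y (p i) else 0) - rhoG G n i" for i
    unfolding dot_def wact_def vsub_def vadd_def y_def by simp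
  then have "(\<Sum>i<n. dot G n (p, s) x i)
      = (\<Sum>i<n. y (p i)) - 2 * (\<Sum>i<n. if s i then y (p i) else 0) - (\<Sum>i<n. rhoG G n i)"
    by (simp only: sum_subtractf sum_distrib_left)
  also have "(\<Sum>i<n. y (p i)) = (\<Sum>i<n. y i)"
    using sum.permute[OF assms, of y] by (simp add: o_def)
  also have "(\<Sum>i<n. if s i then y (p i) else 0) = (\<Sum>i\<in>{i. i < n \<and> s i}. y (p i))"
    by (simp add: sum.If_cases Int_def conj_commute)
  finally show ?thesis
    by (simp add: y_def sum.distrib)
qed

text \<open>For \<open>SO\<^sub>2\<^sub>n\<close> the last coordinate of \<open>\<rho>\<^sub>G\<close> is zero, but an even number of sign changes
  cannot all sit on that single coordinate.\<close>

lemma weyl_sign_change_rhoG_pos: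
  assumes w: "(p, s) \<in> weyl G n" and i: "i < n" "s i"
  shows "\<exists>j<n. s j \<and> 0 < rhoG G n (p j)"
proof (cases "0 < rhoG G n (p i)")
  case True
  then show ?thesis using i by blast
next
  case False
  have perm: "p permutes {..<n}" using w by (simp add: weyl_def)
  then have p_lt: "j < n \<Longrightarrow> p j < n" for j
    using permutes_in_image[OF perm, of j] by simp
  have G: "G = SO_even" and last: "\<not> Suc (p i) < n"
    using False rhoG_pos[OF p_lt[OF i(1)]] by blast+
  define J where "J = {j. j < n \<and> s j}"
  have "even (card J)" using w G by (simp add: weyl_def J_def)
  then have "J \<noteq> {i}" by auto
  moreover have "i \<in> J" using i by (simp add: J_def)
  ultimately obtain j where j: "j \<in> J" "j \<noteq> i" by blast
  have "p j \<noteq> p i" using j(2) permutes_inj[OF perm] by (auto dest: injD)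
  moreover have "p j < n" using j(1) p_lt by (simp add: J_def)
  ultimately have "Suc (p j) < n" using last p_lt[OF i(1)] by linarith
  then show ?thesis using j rhoG_pos[of "p j" n G] by (auto simp: J_def)
qed

lemma sum_dot_shift_neg:
  assumes w: "(p, s) \<in> weyl G n" and sign_change: "\<exists>i<n. s i"
    and lam: "\<forall>i<n. 0 \<le> lam i" and k: "0 \<le> k"
    and size: "wsize n lam - wsize n mu \<le> 2 * k"
  shows "(\<Sum>i<n. vsub (dot G n (p, s) (ivec (shift lam k))) (ivec (shift mu k)) i) < 0"
proof -
  define T where "T = (\<lambda>j. of_int (lam (p j) + k) + rhoG G n (p j))"
  define J where "J = {j. j < n \<and> s j}"
  have perm: "p permutes {..<n}" using w by (simp add: weyl_def)
  then have p_lt: "j < n \<Longrightarrow> p j < n" for j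
    using permutes_in_image[OF perm, of j] by simp
  have T_nonneg: "j \<in> J \<Longrightarrow> 0 \<le> T j" for j
    using lam p_lt[of j] rhoG_nonneg[of "p j" n G] k by (force simp: T_def J_def)
  obtain j0 where j0: "j0 < n" "s j0" "0 < rhoG G n (p j0)"
    using sign_change weyl_sign_change_rhoG_pos[OF w] by blast
  have "of_int k < T j0"
    using j0 lam p_lt[of j0] by (force simp: T_def)
  also have "T j0 \<le> sum T J"
    by (rule member_le_sum) (use j0 T_nonneg in \<open>auto simp: J_def\<close>)
  finally have "of_int (wsize n lam - wsize n mu) < 2 * sum T J"
    using size by linarith
  moreover have "(\<Sum>i<n. vsub (dot G n (p, s) (ivec (shift lam k))) (ivec (shift mu k)) i)
      = of_int (wsize n lam - wsize n mu) - 2 * sum T J"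
    by (simp add: vsub_def sum_subtractf sum_dot[OF perm] sum_ivec_shift T_def J_def)
      (simp add: ivec_def shift_def)
  ultimately show ?thesis by linarith
qed

lemma finite_weyl: "finite (weyl G n)"
proof -
  have "weyl G n \<subseteq> {p. p permutes {..<n}} \<times> (\<lambda>S i. i \<in> S) ` Pow {..<n}"
  proof
    fix w assume "w \<in> weyl G n"
    then obtain p s where w: "w = (p, s)" "p permutes {..<n}" "\<forall>i. n \<le> i \<longrightarrow> \<not> s i"
      unfolding weyl_def by auto
    have "s = (\<lambda>i. i \<in> {i. s i})" and "{i. s i} \<in> Pow {..<n}"
      using w(3) not_le by auto
    then show "w \<in> {p. p permutes {..<n}} \<times> (\<lambda>S i. i \<in> S) ` Pow {..<n}"
      using w by blast
  qed
  then show ?thesis by (rule finite_subset) (auto intro: finite_permutations)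
qed

lemma dot_perm_shift:
  "vsub (dot G n (p, \<lambda>_. False) (ivec (shift lam k))) (ivec (shift mu k))
     = vsub (dot G n (p, \<lambda>_. False) (ivec lam)) (ivec mu)"
  unfolding vsub_def dot_def wact_def vadd_def ivec_def shift_def by auto

lemma Ktilde_eq_Kq_shift:
  assumes lam: "\<forall>i<n. 0 \<le> lam i" and k: "0 \<le> k"
    and size: "wsize n lam - wsize n mu \<le> 2 * k"
  shows "Ktilde G I n h q lam mu = Kq G I n h q (shift lam k) (shift mu k)"
proof -
  define f where "f w = of_int (wsign n w) * Pq G I n h q
      (vsub (dot G n w (ivec (shift lam k))) (ivec (shift mu k)))" for w
  define A where "A = (\<lambda>p. (p, \<lambda>_::nat. False)) ` {p. p permutes {..<n}}"
  have "A \<subseteq> weyl G n" unfolding A_def weyl_def by auto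
  have "f w = 0" if w: "w \<in> weyl G n - A" for w
  proof -
    obtain p s where ps: "w = (p, s)" by fastforce
    have ws: "(p, s) \<in> weyl G n" using w ps by simp
    have "\<exists>i<n. s i"
    proof (rule ccontr)
      assume "\<not> (\<exists>i<n. s i)"
      then have "s = (\<lambda>_. False)" using w ps by (auto simp: weyl_def not_less)
      then show False using w ps by (auto simp: A_def weyl_def)
    qed
    then show ?thesis
      by (simp add: f_def ps Pq_eq_0_if_sum_neg[OF sum_dot_shift_neg[OF ws _ lam k size]])
  qed
  then have "Kq G I n h q (shift lam k) (shift mu k) = sum f A"
    unfolding Kq_def f_def[symmetric]
    using sum.mono_neutral_right[OF finite_weyl \<open>A \<subseteq> weyl G n\<close>] by blast
  also have "\<dots> = (\<Sum>p\<in>{p. p permutes {..<n}}. f (p, \<lambda>_. False))"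
    unfolding A_def by (subst sum.reindex) (auto simp: inj_on_def)
  also have "\<dots> = Ktilde G I n h q lam mu"
    by (simp add: Ktilde_def f_def dot_perm_shift wsign_def)
  finally show ?thesis ..
qed

theorem mainTheorem2:
  fixes G :: grp and n :: nat and I :: "vec set" and lam mu :: "nat \<Rightarrow> int"
    and k :: int and q :: "'a::comm_ring_1"
  assumes "I \<subseteq> simple_roots G n"
    and "is_partition n lam" and "is_partition n mu"
    and "wsize n lam \<ge> wsize n mu"
    and "2 * k \<ge> wsize n lam - wsize n mu"
  shows "(G \<noteq> SO_odd \<longrightarrow>
            Ktilde G I n False q lam mu = Kq G I n False q (shift lam k) (shift mu k))
       \<and> (G = SO_odd \<longrightarrow>
            Ktilde G I n True q lam mu = Kq G I n True q (shift lam k) (shift mu k))"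
proof -
  have "\<forall>i<n. 0 \<le> lam i" using assms(2) by (simp add: is_partition_def)
  moreover have "0 \<le> k" using assms(4,5) by linarith
  ultimately show ?thesis using Ktilde_eq_Kq_shift assms(5) by blast
qed

end
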